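(* Assume A2, let $x\in\mathcal I$ and suppose the $x$-threshold word $\pi$ exists. Then $\pi$ is a valid word.
   Context: Words are finite strings over $\{0,1\}$; $w^\omega$ is the infinite repetition of $w$. Let $\mathcal I\subseteq\mathbb R$ be an interval and $\phi_0,\phi_1:\mathcal I\to\mathcal I$. For a word $w$ put $\phi_w:=\phi_{w_{|w|}}\circ\cdots\circ\phi_{w_1}$ (first letter applied first), $\phi_\epsilon=\mathrm{id}$. Assumption A2: for all $x<y$ in $\mathcal I$ and $k\in\{0,1\}$, $\phi_k(x)<\phi_k(y)$ and $\phi_k(y)-\phi_k(x)<y-x$; moreover $\phi_0,\phi_1$ have fixed points $y_0,y_1\in\mathcal I$ with $y_1<y_0$. The $x$-threshold orbit is the sequence $(x_k)_{k\ge1}$ with $x_1=\phi_1(x)$ and $x_{k+1}=\phi_1(x_k)$ if $x_k\ge x$, $x_{k+1}=\phi_0(x_k)$ if $x_k<x$. The $x$-threshold word is the shortest non-empty finite word $\pi$ such that $x_{k+1}=\phi_{(\pi^\omega)_k}(x_k)$ for all $k\ge1$, when such a word exists. For $p\ge1$, $L_p$ and $R_p$ are the word morphisms determined by $L_p(0)=0^{p+1}1$, $L_p(1)=0^p1$, $R_p(0)=01^p$, $R_p(1)=01^{p+1}$. The set of valid words is the smallest set of words containing $0$ and $1$ and closed under $L_p$ and $R_p$ for all $p\ge1$ (these are exactly the Christoffel words). *)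

theory Defs
  imports "HOL-Analysis.Analysis"
begin

definition letter_map :: "(real \<Rightarrow> real) \<Rightarrow> (real \<Rightarrow> real) \<Rightarrow> nat \<Rightarrow> real \<Rightarrow> real" where
  "letter_map phi0 phi1 a = (if a = 0 then phi0 else phi1)"

text \<open>The x-threshold orbit, 0-indexed: thr_orbit phi0 phi1 x k is the paper's x_(k+1).\<close>
fun thr_orbit :: "(real \<Rightarrow> real) \<Rightarrow> (real \<Rightarrow> real) \<Rightarrow> real \<Rightarrow> nat \<Rightarrow> real" where
  "thr_orbit phi0 phi1 x 0 = phi1 x"
| "thr_orbit phi0 phi1 x (Suc k) =
     (if thr_orbit phi0 phi1 x k \<ge> x then phi1 (thr_orbit phi0 phi1 x k)
      else phi0 (thr_orbit phi0 phi1 x k))"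

definition drives_orbit :: "(real \<Rightarrow> real) \<Rightarrow> (real \<Rightarrow> real) \<Rightarrow> real \<Rightarrow> nat list \<Rightarrow> bool" where
  "drives_orbit phi0 phi1 x w \<longleftrightarrow>
     w \<noteq> [] \<and> set w \<subseteq> {0, 1} \<and>
     (\<forall>j. thr_orbit phi0 phi1 x (Suc j) =
           letter_map phi0 phi1 (w ! (j mod length w)) (thr_orbit phi0 phi1 x j))"

definition is_threshold_word :: "(real \<Rightarrow> real) \<Rightarrow> (real \<Rightarrow> real) \<Rightarrow> real \<Rightarrow> nat list \<Rightarrow> bool" where
  "is_threshold_word phi0 phi1 x tw \<longleftrightarrow>
     drives_orbit phi0 phi1 x tw \<and>
     (\<forall>w. drives_orbit phi0 phi1 x w \<longrightarrow> length tw \<le> length w)"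

definition morphL :: "nat \<Rightarrow> nat list \<Rightarrow> nat list" where
  "morphL p w = concat (map (\<lambda>a. if a = 0 then replicate (p + 1) 0 @ [1] else replicate p 0 @ [1]) w)"

definition morphR :: "nat \<Rightarrow> nat list \<Rightarrow> nat list" where
  "morphR p w = concat (map (\<lambda>a. if a = 0 then 0 # replicate p 1 else 0 # replicate (p + 1) 1) w)"

inductive valid_word :: "nat list \<Rightarrow> bool" where
  valid_zero: "valid_word [0]"
| valid_one: "valid_word [1]"
| valid_L: "valid_word w \<Longrightarrow> p \<ge> 1 \<Longrightarrow> valid_word (morphL p w)"
| valid_R: "valid_word w \<Longrightarrow> p \<ge> 1 \<Longrightarrow> valid_word (morphR p w)"

definition assumption_A2 :: "real set \<Rightarrow> (real \<Rightarrow> real) \<Rightarrow> (real \<Rightarrow> real) \<Rightarrow> bool" where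
  "assumption_A2 I phi0 phi1 \<longleftrightarrow>
     (\<forall>x\<in>I. \<forall>y\<in>I. x < y \<longrightarrow>
        phi0 x < phi0 y \<and> phi0 y - phi0 x < y - x \<and>
        phi1 x < phi1 y \<and> phi1 y - phi1 x < y - x) \<and>
     (\<exists>y0\<in>I. \<exists>y1\<in>I. phi0 y0 = y0 \<and> phi1 y1 = y1 \<and> y1 < y0)"

end

theory Submission
  imports Defs
begin

text \<open>The letters of the threshold orbit form a sequence whose minimal period is the length of the
  threshold word: along the orbit, which stays in \<open>[f1 x, f0 x)\<close>, the two branches never agree,
  so the orbit determines its letters. We induct on this period. If the letters are not constant
  then \<open>f1 x < x < f0 x\<close>, and the returns of the orbit to a subinterval \<open>R\<close> of \<open>[f1 x, x)\<close> cut
  the letter sequence into blocks \<open>0\<^sup>p\<^sup>+\<^sup>1 1\<close>, \<open>0\<^sup>p 1\<close> (if \<open>f1 (f0 x) \<le> x\<close>) or \<open>0 1\<^sup>q\<close>,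
  \<open>0 1\<^sup>q\<^sup>+\<^sup>1\<close> (otherwise). The first-return map to \<open>R\<close> is again a threshold dynamics, with branches
  \<open>f1 \<circ> f0\<^sup>p\<^sup>+\<^sup>1\<close>, \<open>f1 \<circ> f0\<^sup>p\<close> (resp. \<open>f1\<^sup>q \<circ> f0\<close>, \<open>f1\<^sup>q\<^sup>+\<^sup>1 \<circ> f0\<close>), which are still increasing
  contractions, and with a threshold \<open>c\<close> found by the intermediate value theorem so that the
  type of the block starting at \<open>t\<close> is the letter of \<open>t\<close>. Its letters have a strictly smaller
  minimal period, and the original word is the image of its threshold word under \<open>L\<^sub>p\<close> (resp.
  \<open>R\<^sub>q\<close>).\<close>

section \<open>Increasing contractions of an interval\<close>

definition incr_nonexpansive_on :: "real set \<Rightarrow> (real \<Rightarrow> real) \<Rightarrow> bool" where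
  "incr_nonexpansive_on I f \<longleftrightarrow> (\<forall>a\<in>I. \<forall>b\<in>I. a < b \<longrightarrow> f a < f b \<and> f b - f a \<le> b - a)"

definition incr_contraction_on :: "real set \<Rightarrow> (real \<Rightarrow> real) \<Rightarrow> bool" where
  "incr_contraction_on I f \<longleftrightarrow> (\<forall>a\<in>I. \<forall>b\<in>I. a < b \<longrightarrow> f a < f b \<and> f b - f a < b - a)"

lemma incr_contraction_on_imp_nonexpansive:
  "incr_contraction_on I f \<Longrightarrow> incr_nonexpansive_on I f"
  unfolding incr_contraction_on_def incr_nonexpansive_on_def by force

lemma incr_nonexpansive_on_less_iff:
  "incr_nonexpansive_on I f \<Longrightarrow> a \<in> I \<Longrightarrow> b \<in> I \<Longrightarrow> f a < f b \<longleftrightarrow> a < b"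
  unfolding incr_nonexpansive_on_def by (metis less_asym linorder_neqE)

lemma incr_nonexpansive_on_le_iff:
  "incr_nonexpansive_on I f \<Longrightarrow> a \<in> I \<Longrightarrow> b \<in> I \<Longrightarrow> f a \<le> f b \<longleftrightarrow> a \<le> b"
  using incr_nonexpansive_on_less_iff[of I f b a] by (simp add: not_less[symmetric])

lemma incr_nonexpansive_on_diff_le:
  "incr_nonexpansive_on I f \<Longrightarrow> a \<in> I \<Longrightarrow> b \<in> I \<Longrightarrow> a \<le> b \<Longrightarrow> f b - f a \<le> b - a"
  unfolding incr_nonexpansive_on_def by (cases "a = b") auto

lemma incr_contraction_on_diff_less:
  "incr_contraction_on I f \<Longrightarrow> a \<in> I \<Longrightarrow> b \<in> I \<Longrightarrow> a < b \<Longrightarrow> f b - f a < b - a"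
  unfolding incr_contraction_on_def by auto

lemma funpow_image_subset: "f ` I \<subseteq> I \<Longrightarrow> (f ^^ k) ` I \<subseteq> I"
  by (induction k) auto

lemma funpow_cong_invariant:
  assumes "u \<in> R" "\<And>t. t \<in> R \<Longrightarrow> h t \<in> R" "\<And>t. t \<in> R \<Longrightarrow> h t = h' t"
  shows "(h ^^ j) u = (h' ^^ j) u"
proof -
  have "(h ^^ j) u \<in> R \<and> (h ^^ j) u = (h' ^^ j) u"
    by (induction j) (use assms in auto)
  then show ?thesis ..
qed

lemma incr_nonexpansive_on_comp:
  assumes "incr_nonexpansive_on I g" "incr_nonexpansive_on I h" "h ` I \<subseteq> I"
  shows "incr_nonexpansive_on I (g \<circ> h)"
  unfolding incr_nonexpansive_on_def
proof (intro ballI impI)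
  fix a b assume ab: "a \<in> I" "b \<in> I" "a < b"
  then have "h a \<in> I" "h b \<in> I" "h a < h b" "h b - h a \<le> b - a"
    using assms(2,3) unfolding incr_nonexpansive_on_def by auto
  then show "(g \<circ> h) a < (g \<circ> h) b \<and> (g \<circ> h) b - (g \<circ> h) a \<le> b - a"
    using assms(1) unfolding incr_nonexpansive_on_def by fastforce
qed

lemma incr_nonexpansive_on_funpow:
  assumes "f ` I \<subseteq> I" "incr_nonexpansive_on I f"
  shows "incr_nonexpansive_on I (f ^^ k)"
proof (induction k)
  case 0
  show ?case by (simp add: incr_nonexpansive_on_def)
next
  case (Suc k)
  show ?case
    using incr_nonexpansive_on_comp[OF assms(2) Suc funpow_image_subset[OF assms(1)]]
    by (simp add: o_def)
qed

lemma incr_contraction_on_comp: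
  assumes "incr_contraction_on I g" "incr_nonexpansive_on I h" "h ` I \<subseteq> I"
  shows "incr_contraction_on I (g \<circ> h)"
  unfolding incr_contraction_on_def
proof (intro ballI impI)
  fix a b assume ab: "a \<in> I" "b \<in> I" "a < b"
  then have "h a \<in> I" "h b \<in> I" "h a < h b" "h b - h a \<le> b - a"
    using assms(2,3) unfolding incr_nonexpansive_on_def by auto
  then show "(g \<circ> h) a < (g \<circ> h) b \<and> (g \<circ> h) b - (g \<circ> h) a < b - a"
    using assms(1) unfolding incr_contraction_on_def by fastforce
qed

lemma incr_contraction_on_comp':
  assumes "incr_nonexpansive_on I g" "incr_contraction_on I h" "h ` I \<subseteq> I"
  shows "incr_contraction_on I (g \<circ> h)"
  unfolding incr_contraction_on_def
proof (intro ballI impI)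
  fix a b assume ab: "a \<in> I" "b \<in> I" "a < b"
  then have "h a \<in> I" "h b \<in> I" "h a < h b" "h b - h a < b - a"
    using assms(2,3) unfolding incr_contraction_on_def by auto
  then show "(g \<circ> h) a < (g \<circ> h) b \<and> (g \<circ> h) b - (g \<circ> h) a < b - a"
    using assms(1) unfolding incr_nonexpansive_on_def by fastforce
qed

lemma incr_nonexpansive_on_abs_diff_le:
  "incr_nonexpansive_on I f \<Longrightarrow> a \<in> I \<Longrightarrow> b \<in> I \<Longrightarrow> \<bar>f a - f b\<bar> \<le> \<bar>a - b\<bar>"
  using incr_nonexpansive_on_diff_le[of I f a b] incr_nonexpansive_on_diff_le[of I f b a]
    incr_nonexpansive_on_le_iff[of I f a b]
  by (cases "a \<le> b") auto

lemma incr_nonexpansive_on_continuous_on: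
  assumes "incr_nonexpansive_on I f"
  shows "continuous_on I f"
proof (rule lipschitz_on_continuous_on)
  show "1-lipschitz_on I f"
  proof (rule lipschitz_onI)
    fix a b assume "a \<in> I" "b \<in> I"
    then show "dist (f a) (f b) \<le> 1 * dist a b"
      using incr_nonexpansive_on_abs_diff_le[OF assms] by (simp add: dist_real_def)
  qed simp
qed

lemma incr_nonexpansive_on_IVT:
  assumes "is_interval I" "incr_nonexpansive_on I f" "a \<in> I" "b \<in> I" "a \<le> b"
    and "f a \<le> y" "y \<le> f b"
  obtains c where "c \<in> I" "a \<le> c" "c \<le> b" "f c = y"
proof -
  have ab: "{a..b} \<subseteq> I"
  proof
    fix z assume "z \<in> {a..b}"
    then have "a \<le> z" "z \<le> b" by auto
    with assms(1,3,4) show "z \<in> I" unfolding is_interval_1 by blast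
  qed
  then have "continuous_on {a..b} f"
    using continuous_on_subset incr_nonexpansive_on_continuous_on[OF assms(2)] by blast
  then obtain c where c: "a \<le> c" "c \<le> b" "f c = y"
    using IVT'[of f a y b] assms(5-7) by blast
  moreover from c ab have "c \<in> I" by auto
  ultimately show ?thesis by (intro that)
qed

section \<open>Periods and block decompositions\<close>

definition is_period :: "(nat \<Rightarrow> 'a) \<Rightarrow> nat \<Rightarrow> bool" where
  "is_period s k \<longleftrightarrow> 0 < k \<and> (\<forall>j. s (j + k) = s j)"

definition minimal_period :: "(nat \<Rightarrow> 'a) \<Rightarrow> nat \<Rightarrow> bool" where
  "minimal_period s n \<longleftrightarrow> is_period s n \<and> (\<forall>k. is_period s k \<longrightarrow> n \<le> k)"

lemma is_period_mod:
  assumes "is_period s k"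
  shows "s (j mod k) = s j"
proof -
  have "s (r + i * k) = s r" for r i
  proof (induction i)
    case (Suc i)
    have "s (r + Suc i * k) = s ((r + i * k) + k)" by (simp add: algebra_simps)
    also have "\<dots> = s r" using assms Suc unfolding is_period_def by simp
    finally show ?case .
  qed simp
  from this[of "j mod k" "j div k"] show ?thesis by (simp add: mod_div_mult_eq)
qed

lemma is_period_one_iff: "is_period s 1 \<longleftrightarrow> (\<forall>j. s j = s 0)"
proof
  assume "is_period s 1"
  then show "\<forall>j. s j = s 0"
    using is_period_mod[of s 1] by (metis mod_by_1)
qed (unfold is_period_def, metis Suc_eq_plus1 zero_less_one)

definition block_start :: "('b \<Rightarrow> 'a list) \<Rightarrow> (nat \<Rightarrow> 'b) \<Rightarrow> nat \<Rightarrow> nat" where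
  "block_start blk w i = (\<Sum>k<i. length (blk (w k)))"

lemma block_start_0 [simp]: "block_start blk w 0 = 0"
  by (simp add: block_start_def)

lemma block_start_Suc [simp]:
  "block_start blk w (Suc i) = block_start blk w i + length (blk (w i))"
  by (simp add: block_start_def)

text \<open>\<open>s\<close> is the infinite word \<open>blk (w 0) blk (w 1) blk (w 2) \<dots>\<close>\<close>
definition is_block_concat :: "('b \<Rightarrow> 'a list) \<Rightarrow> (nat \<Rightarrow> 'b) \<Rightarrow> (nat \<Rightarrow> 'a) \<Rightarrow> bool" where
  "is_block_concat blk w s \<longleftrightarrow>
     (\<forall>i. map s [block_start blk w i..<block_start blk w (Suc i)] = blk (w i))"

lemma is_block_concat_nth:
  assumes "is_block_concat blk w s" "r < length (blk (w i))"
  shows "s (block_start blk w i + r) = blk (w i) ! r"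
proof -
  have "map s [block_start blk w i..<block_start blk w (Suc i)] ! r = blk (w i) ! r"
    using assms(1) unfolding is_block_concat_def by simp
  with assms(2) show ?thesis by simp
qed

lemma is_block_concat_prefix:
  assumes "is_block_concat blk w s"
  shows "map s [0..<block_start blk w m] = concat (map blk (map w [0..<m]))"
proof (induction m)
  case (Suc m)
  have "[0..<block_start blk w (Suc m)]
      = [0..<block_start blk w m] @ [block_start blk w m..<block_start blk w (Suc m)]"
    using upt_add_eq_append[of 0 "block_start blk w m"] by simp
  with Suc assms show ?case unfolding is_block_concat_def by simp
qed simp

lemma strict_mono_block_start:
  "(\<And>i. blk (w i) \<noteq> []) \<Longrightarrow> strict_mono (block_start blk w)"
  by (simp add: strict_mono_Suc_iff)

lemma block_start_ge_double:
  assumes "\<And>i. 2 \<le> length (blk (w i))"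
  shows "2 * i \<le> block_start blk w i"
proof (induction i)
  case (Suc i)
  then show ?case using assms[of i] by simp
qed simp

lemma block_start_locate:
  assumes "\<And>i. blk (w i) \<noteq> []"
  shows "\<exists>i r. j = block_start blk w i + r \<and> r < length (blk (w i))"
proof (induction j)
  case 0
  show ?case using assms[of 0] by (intro exI[of _ 0]) auto
next
  case (Suc j)
  then obtain i r where ir: "j = block_start blk w i + r" "r < length (blk (w i))" by blast
  show ?case
  proof (cases "Suc r < length (blk (w i))")
    case True
    with ir show ?thesis by (intro exI[of _ i] exI[of _ "Suc r"]) simp
  next
    case False
    with ir assms[of "Suc i"] show ?thesis by (intro exI[of _ "Suc i"] exI[of _ 0]) simp
  qed
qed

lemma block_start_add_period:
  assumes "is_period w k"
  shows "block_start blk w (i + k) = block_start blk w i + block_start blk w k"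
proof (induction i)
  case (Suc i)
  have "w (i + k) = w i" using assms unfolding is_period_def by blast
  with Suc show ?case by simp
qed simp

lemma is_period_block_concat:
  assumes concat: "is_block_concat blk w s" and nonempty: "\<And>i. blk (w i) \<noteq> []"
    and period: "is_period w k"
  shows "is_period s (block_start blk w k)"
proof -
  have "block_start blk w 0 < block_start blk w k"
    using strict_monoD[OF strict_mono_block_start[of blk w, OF nonempty]] period
    unfolding is_period_def by blast
  moreover have "s (j + block_start blk w k) = s j" for j
  proof -
    obtain i r where ir: "j = block_start blk w i + r" "r < length (blk (w i))"
      using block_start_locate[of blk w, OF nonempty] by blast
    have w_ik: "w (i + k) = w i" using period unfolding is_period_def by blast
    have "s (j + block_start blk w k) = s (block_start blk w (i + k) + r)"
      using ir block_start_add_period[OF period, of blk i] by (simp add: algebra_simps)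
    also have "\<dots> = blk (w i) ! r"
      using is_block_concat_nth[OF concat, of r "i + k"] ir w_ik by simp
    also have "\<dots> = s j"
      using is_block_concat_nth[OF concat] ir by simp
    finally show ?thesis .
  qed
  ultimately show ?thesis unfolding is_period_def by simp
qed

lemma period_is_block_start:
  assumes concat: "is_block_concat blk w s" and nonempty: "\<And>i. blk (w i) \<noteq> []"
    and period: "\<forall>j. s (j + n) = s j"
    and no_overlap: "\<And>i r. 0 < r \<Longrightarrow> r < length (blk (w i))
      \<Longrightarrow> \<exists>k. r + k < length (blk (w i)) \<and> blk (w i) ! (r + k) \<noteq> s k"
  shows "\<exists>m. block_start blk w m = n"
proof -
  obtain i r where ir: "n = block_start blk w i + r" "r < length (blk (w i))"
    using block_start_locate[of blk w, OF nonempty] by blast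
  have "r = 0"
  proof (rule ccontr)
    assume "r \<noteq> 0"
    then obtain k where k: "r + k < length (blk (w i))" "blk (w i) ! (r + k) \<noteq> s k"
      using no_overlap ir(2) by blast
    have "blk (w i) ! (r + k) = s (k + n)"
      using is_block_concat_nth[OF concat k(1)] ir(1) by (simp add: algebra_simps)
    with k(2) period show False by simp
  qed
  with ir show ?thesis by auto
qed

lemma minimal_period_block_concat:
  assumes concat: "is_block_concat blk w s"
    and long: "\<And>i. 2 \<le> length (blk (w i))"
    and decode: "\<And>i. w i = s (block_start blk w i + d)"
    and minimal: "minimal_period s n"
    and boundary: "block_start blk w m = n"
  shows "minimal_period w m" "m < n"
proof -
  have nonempty: "\<And>i. blk (w i) \<noteq> []"
    using long by (metis list.size(3) not_numeral_le_zero)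
  have n: "0 < n" "\<And>j. s (j + n) = s j"
    using minimal unfolding minimal_period_def is_period_def by auto
  have m: "0 < m"
    using boundary n(1) by (cases m) auto
  have shift: "block_start blk w (i + m) = block_start blk w i + n \<and> w (i + m) = w i" for i
  proof (induction i)
    case 0
    show ?case using decode[of m] decode[of 0] boundary n(2)[of d] by (simp add: add.commute)
  next
    case (Suc i)
    then have start: "block_start blk w (Suc i + m) = block_start blk w (Suc i) + n" by simp
    have "w (Suc i + m) = s ((block_start blk w (Suc i) + d) + n)"
      using decode[of "Suc i + m"] start by (simp add: algebra_simps)
    then show ?case using start decode[of "Suc i"] n(2) by simp
  qed
  then have period: "is_period w m"
    using m unfolding is_period_def by simp
  have "m \<le> k" if "is_period w k" for k
  proof (rule ccontr)
    assume "\<not> m \<le> k"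
    then have "block_start blk w k < n"
      using strict_monoD[OF strict_mono_block_start[of blk w, OF nonempty], of k m] boundary
      by simp
    moreover have "n \<le> block_start blk w k"
      using minimal is_period_block_concat[OF concat nonempty that]
      unfolding minimal_period_def by blast
    ultimately show False by simp
  qed
  with period show "minimal_period w m" unfolding minimal_period_def by blast
  show "m < n"
    using block_start_ge_double[of blk w m] long boundary m by simp
qed

lemma block_concat_of_return_map:
  fixes orb :: "nat \<Rightarrow> 'a" and G :: "'a \<Rightarrow> 'a"
  assumes start: "orb 0 \<in> R" and closed: "\<And>t. t \<in> R \<Longrightarrow> G t \<in> R"
    and block: "\<And>j. orb j \<in> R \<Longrightarrow>
      map s [j..<j + length (blk (kind (orb j)))] = blk (kind (orb j))
      \<and> orb (j + length (blk (kind (orb j)))) = G (orb j)"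
  shows "is_block_concat blk (\<lambda>i. kind ((G ^^ i) (orb 0))) s"
    and "orb (block_start blk (\<lambda>i. kind ((G ^^ i) (orb 0))) i) = (G ^^ i) (orb 0)"
proof -
  define w where "w = (\<lambda>i. kind ((G ^^ i) (orb 0)))"
  have return: "orb (block_start blk w i) = (G ^^ i) (orb 0) \<and> (G ^^ i) (orb 0) \<in> R" for i
  proof (induction i)
    case (Suc i)
    then have "w i = kind (orb (block_start blk w i))" by (simp add: w_def)
    with Suc block[of "block_start blk w i"] closed show ?case by simp
  qed (simp add: start)
  have "is_block_concat blk w s"
    unfolding is_block_concat_def
  proof
    fix i
    have "w i = kind (orb (block_start blk w i))" using return by (simp add: w_def)
    with block[of "block_start blk w i"] return show
      "map s [block_start blk w i..<block_start blk w (Suc i)] = blk (w i)" by simp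
  qed
  then show "is_block_concat blk (\<lambda>i. kind ((G ^^ i) (orb 0))) s" by (simp add: w_def)
  show "orb (block_start blk (\<lambda>i. kind ((G ^^ i) (orb 0))) i) = (G ^^ i) (orb 0)"
    using return by (simp add: w_def)
qed

text \<open>Position \<open>d\<close> after the start of a block (possibly the first letter of the next block)
  tells its type, and no proper suffix of a block is a prefix of \<open>s\<close>; then the block types
  inherit the minimal period.\<close>
lemma minimal_period_of_return_blocks:
  fixes orb :: "nat \<Rightarrow> 'a" and G :: "'a \<Rightarrow> 'a" and kind :: "'a \<Rightarrow> 'b"
  defines "w \<equiv> \<lambda>i. kind ((G ^^ i) (orb 0))"
  assumes start: "orb 0 \<in> R" and closed: "\<And>t. t \<in> R \<Longrightarrow> G t \<in> R"
    and blocks: "\<And>j. orb j \<in> R \<Longrightarrow>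
      map s [j..<j + length (blk (kind (orb j)))] = blk (kind (orb j))
      \<and> orb (j + length (blk (kind (orb j)))) = G (orb j)"
    and long: "\<And>t. t \<in> R \<Longrightarrow> 2 \<le> length (blk (kind t))"
    and decode: "\<And>j. orb j \<in> R \<Longrightarrow> s (j + d) = kind (orb j)"
    and no_overlap: "\<And>t r. t \<in> R \<Longrightarrow> 0 < r \<Longrightarrow> r < length (blk (kind t))
      \<Longrightarrow> \<exists>k. r + k < length (blk (kind t)) \<and> blk (kind t) ! (r + k) \<noteq> s k"
    and minimal: "minimal_period s n"
  obtains m where "minimal_period w m" "m < n"
    "map s [0..<n] = concat (map blk (map w [0..<m]))"
proof -
  have orbit_R: "(G ^^ i) (orb 0) \<in> R" for i
    by (induction i) (simp_all add: start closed)
  have concat: "is_block_concat blk w s"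
    and returns: "orb (block_start blk w i) = (G ^^ i) (orb 0)" for i
    using block_concat_of_return_map[where orb = orb and R = R and G = G and kind = kind
        and blk = blk and s = s] start closed blocks
    by (simp_all add: w_def)
  have long_w: "2 \<le> length (blk (w i))" for i
    using long orbit_R by (simp add: w_def)
  then have nonempty: "blk (w i) \<noteq> []" for i
    by (metis list.size(3) not_numeral_le_zero)
  have decode_w: "w i = s (block_start blk w i + d)" for i
    using decode[of "block_start blk w i"] returns orbit_R by (simp add: w_def)
  have "\<forall>j. s (j + n) = s j"
    using minimal unfolding minimal_period_def is_period_def by blast
  then obtain m where boundary: "block_start blk w m = n"
    using period_is_block_start[OF concat nonempty] no_overlap orbit_R by (fastforce simp: w_def)
  show ?thesis
  proof
    show "minimal_period w m" "m < n"
      using minimal_period_block_concat[OF concat long_w decode_w minimal boundary] by auto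
    show "map s [0..<n] = concat (map blk (map w [0..<m]))"
      using is_block_concat_prefix[OF concat, of m] boundary by simp
  qed
qed

section \<open>Threshold orbits\<close>

definition thr_letters :: "(real \<Rightarrow> real) \<Rightarrow> (real \<Rightarrow> real) \<Rightarrow> real \<Rightarrow> nat \<Rightarrow> nat" where
  "thr_letters f0 f1 x j = (if x \<le> thr_orbit f0 f1 x j then 1 else 0)"

lemma thr_orbit_Suc_letter_map:
  "thr_orbit f0 f1 x (Suc j) = letter_map f0 f1 (thr_letters f0 f1 x j) (thr_orbit f0 f1 x j)"
  by (simp add: thr_letters_def letter_map_def)

lemma thr_orbit_eq_funpow:
  "thr_orbit f0 f1 x j = ((\<lambda>t. if x \<le> t then f1 t else f0 t) ^^ j) (f1 x)"
  by (induction j) auto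

lemma thr_letters_01: "thr_letters f0 f1 x j \<in> {0, 1}"
  by (simp add: thr_letters_def)

lemma thr_letters_eq_0: "thr_orbit f0 f1 x j < x \<Longrightarrow> thr_letters f0 f1 x j = 0"
  and thr_letters_eq_1: "x \<le> thr_orbit f0 f1 x j \<Longrightarrow> thr_letters f0 f1 x j = 1"
  by (simp_all add: thr_letters_def)

lemma drives_orbit_if_letters:
  assumes "w \<noteq> []" and letters: "\<And>j. w ! (j mod length w) = thr_letters f0 f1 x j"
  shows "drives_orbit f0 f1 x w"
  unfolding drives_orbit_def
proof (intro conjI allI subsetI)
  fix a assume "a \<in> set w"
  then obtain i where "i < length w" "a = w ! i" by (auto simp: in_set_conv_nth)
  then show "a \<in> {0, 1}" using letters[of i] thr_letters_01 by simp
qed (use assms in \<open>simp_all add: letter_map_def thr_letters_def\<close>)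

lemma thr_orbit_run0:
  assumes "thr_orbit f0 f1 x j = t" and "\<And>r. r < a \<Longrightarrow> (f0 ^^ r) t < x"
  shows "thr_orbit f0 f1 x (j + a) = (f0 ^^ a) t \<and>
    map (thr_letters f0 f1 x) [j..<j + a] = replicate a 0"
  using assms(2)
proof (induction a)
  case (Suc a)
  have step: "(f0 ^^ a) t < x" using Suc.prems by simp
  have "thr_orbit f0 f1 x (j + a) = (f0 ^^ a) t \<and>
      map (thr_letters f0 f1 x) [j..<j + a] = replicate a 0"
    using Suc by simp
  with step show ?case
    by (simp add: thr_letters_eq_0 thr_letters_eq_1 replicate_append_same[symmetric])
qed (simp add: assms(1))

lemma thr_orbit_run1:
  assumes "thr_orbit f0 f1 x j = t" and "\<And>r. r < a \<Longrightarrow> x \<le> (f1 ^^ r) t"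
  shows "thr_orbit f0 f1 x (j + a) = (f1 ^^ a) t \<and>
    map (thr_letters f0 f1 x) [j..<j + a] = replicate a 1"
  using assms(2)
proof (induction a)
  case (Suc a)
  have step: "x \<le> (f1 ^^ a) t" using Suc.prems by simp
  have "thr_orbit f0 f1 x (j + a) = (f1 ^^ a) t \<and>
      map (thr_letters f0 f1 x) [j..<j + a] = replicate a 1"
    using Suc by simp
  with step show ?case
    by (simp add: thr_letters_eq_0 thr_letters_eq_1 replicate_append_same[symmetric])
qed (simp add: assms(1))

locale threshold_system =
  fixes I :: "real set" and f0 f1 :: "real \<Rightarrow> real" and x :: real
  assumes interval: "is_interval I"
    and maps0: "f0 ` I \<subseteq> I" and maps1: "f1 ` I \<subseteq> I"
    and contraction0: "incr_contraction_on I f0" and contraction1: "incr_contraction_on I f1"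
    and threshold: "x \<in> I"
begin

abbreviation orbit :: "nat \<Rightarrow> real" where "orbit \<equiv> thr_orbit f0 f1 x"

abbreviation letters :: "nat \<Rightarrow> nat" where "letters \<equiv> thr_letters f0 f1 x"

lemmas nonexpansive0 = incr_contraction_on_imp_nonexpansive[OF contraction0]
  and nonexpansive1 = incr_contraction_on_imp_nonexpansive[OF contraction1]

lemma f0_in: "t \<in> I \<Longrightarrow> f0 t \<in> I" and f1_in: "t \<in> I \<Longrightarrow> f1 t \<in> I"
  using maps0 maps1 by auto

lemma orbit_in: "orbit j \<in> I"
  by (induction j) (simp_all add: f0_in f1_in threshold)

lemma letters_eq_1_if: "x \<le> f1 x \<Longrightarrow> letters j = 1"
proof -
  assume fix1: "x \<le> f1 x"
  have "x \<le> orbit j"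
  proof (induction j)
    case (Suc j)
    then have "f1 x \<le> f1 (orbit j)"
      using incr_nonexpansive_on_le_iff[OF nonexpansive1 threshold orbit_in] by simp
    with Suc fix1 show ?case by simp
  qed (simp add: fix1)
  then show ?thesis by (simp add: thr_letters_def)
qed

lemma letters_eq_0_if: "f1 x < x \<Longrightarrow> f0 x \<le> x \<Longrightarrow> letters j = 0"
proof -
  assume below: "f1 x < x" and fix0: "f0 x \<le> x"
  have "orbit j < x"
  proof (induction j)
    case (Suc j)
    then have "f0 (orbit j) < f0 x"
      using incr_nonexpansive_on_less_iff[OF nonexpansive0 orbit_in threshold] by simp
    with Suc fix0 show ?case by simp
  qed (simp add: below)
  then show ?thesis by (simp add: thr_letters_def)
qed

lemma straddle_if_not_constant:
  assumes "\<not> is_period letters 1"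
  shows "f1 x < x" "x < f0 x"
proof -
  show below: "f1 x < x"
  proof (rule ccontr)
    assume "\<not> f1 x < x"
    then have "\<forall>j. letters j = letters 0" using letters_eq_1_if by simp
    with assms show False unfolding is_period_one_iff by blast
  qed
  show "x < f0 x"
  proof (rule ccontr)
    assume "\<not> x < f0 x"
    then have "\<forall>j. letters j = letters 0" using letters_eq_0_if[OF below] by simp
    with assms show False unfolding is_period_one_iff by blast
  qed
qed

lemma f1_less_f0:
  assumes "f1 x < x" "x < f0 x" "t \<in> I" "f1 x \<le> t" "t < f0 x"
  shows "f1 t < f0 t"
proof (cases "x \<le> t")
  case True
  then show ?thesis
    using incr_nonexpansive_on_diff_le[OF nonexpansive1 threshold assms(3) True]
      incr_nonexpansive_on_le_iff[OF nonexpansive0 threshold assms(3)] assms(1,5) by simp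
next
  case False
  then show ?thesis
    using incr_nonexpansive_on_less_iff[OF nonexpansive1 assms(3) threshold]
      incr_nonexpansive_on_diff_le[OF nonexpansive0 assms(3) threshold] assms(2,4) by simp
qed

lemma orbit_bounds:
  assumes "f1 x < x" "x < f0 x"
  shows "f1 x \<le> orbit j \<and> orbit j < f0 x"
proof (induction j)
  case (Suc j)
  show ?case
  proof (cases "x \<le> orbit j")
    case True
    then show ?thesis
      using incr_nonexpansive_on_le_iff[OF nonexpansive1 threshold orbit_in]
        incr_nonexpansive_on_diff_le[OF nonexpansive1 threshold orbit_in True] Suc assms(1)
      by simp
  next
    case False
    then have "f0 x - f0 (orbit j) \<le> x - orbit j"
      using incr_nonexpansive_on_diff_le[OF nonexpansive0 orbit_in threshold] by simp
    with False show ?thesis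
      using incr_nonexpansive_on_less_iff[OF nonexpansive0 orbit_in threshold] Suc assms(2)
      by simp
  qed
qed (use assms in auto)

lemma letters_if_drives_orbit:
  assumes "f1 x < x" "x < f0 x" and "drives_orbit f0 f1 x w"
  shows "w ! (j mod length w) = letters j"
proof -
  have "w \<noteq> []" "set w \<subseteq> {0, 1}"
    using assms(3) unfolding drives_orbit_def by auto
  then have "w ! (j mod length w) \<in> {0, 1}"
    using nth_mem[of "j mod length w" w] by fastforce
  moreover have "letter_map f0 f1 (w ! (j mod length w)) (orbit j)
      = letter_map f0 f1 (letters j) (orbit j)"
    using assms(3) thr_orbit_Suc_letter_map unfolding drives_orbit_def by metis
  moreover have "f1 (orbit j) \<noteq> f0 (orbit j)"
    using f1_less_f0[OF assms(1,2) orbit_in] orbit_bounds[OF assms(1,2)] by (simp add: less_le)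
  ultimately show ?thesis
    using thr_letters_01[of f0 f1 x j] by (auto simp: letter_map_def)
qed

lemma threshold_word_eq_letters:
  assumes "f1 x < x" "x < f0 x" and "is_threshold_word f0 f1 x tw"
  shows "minimal_period letters (length tw)" "tw = map letters [0..<length tw]"
proof -
  have drives: "drives_orbit f0 f1 x tw"
    and shortest: "\<And>w. drives_orbit f0 f1 x w \<Longrightarrow> length tw \<le> length w"
    using assms(3) unfolding is_threshold_word_def by auto
  have tw: "\<And>j. tw ! (j mod length tw) = letters j"
    using letters_if_drives_orbit[OF assms(1,2) drives] .
  have pos: "0 < length tw"
    using drives unfolding drives_orbit_def by simp
  have "is_period letters (length tw)"
    unfolding is_period_def using pos tw by (metis mod_add_self2)
  moreover have "length tw \<le> k" if "is_period letters k" for k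
  proof -
    have "drives_orbit f0 f1 x (map letters [0..<k])"
      using that is_period_mod[OF that]
      by (intro drives_orbit_if_letters) (auto simp: is_period_def)
    then show ?thesis using shortest by fastforce
  qed
  ultimately show "minimal_period letters (length tw)"
    unfolding minimal_period_def by blast
  show "tw = map letters [0..<length tw]"
  proof (rule nth_equalityI)
    fix i assume "i < length tw"
    then show "tw ! i = map letters [0..<length tw] ! i" using tw[of i] by simp
  qed simp
qed

lemma orbit_block_0_1s:
  assumes "orbit j = t" "t < x" "\<And>r. r < a \<Longrightarrow> x \<le> (f1 ^^ r) (f0 t)"
  shows "map letters [j..<j + Suc a] = 0 # replicate a 1 \<and> orbit (j + Suc a) = (f1 ^^ a) (f0 t)"
proof -
  have "orbit (Suc j) = f0 t" using assms(1,2) by simp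
  from thr_orbit_run1[of f0 f1 x "Suc j" "f0 t" a, OF this assms(3)] show ?thesis
    using assms(1,2) by (simp add: upt_conv_Cons thr_letters_eq_0 del: upt_Suc)
qed

lemma orbit_block_0s_1:
  assumes "orbit j = t" "\<And>r. r < a \<Longrightarrow> (f0 ^^ r) t < x" "x \<le> (f0 ^^ a) t"
  shows "map letters [j..<j + Suc a] = replicate a 0 @ [1] \<and> orbit (j + Suc a) = f1 ((f0 ^^ a) t)"
  using thr_orbit_run0[OF assms(1,2)] assms(3) by (simp add: thr_letters_eq_1)

lemma f1_run_ends:
  assumes "orbit j = t" "j \<le> j'" "letters j' = 0"
  shows "\<exists>k. (f1 ^^ k) t < x"
  using assms
proof (induction "j' - j" arbitrary: j t)
  case 0
  then show ?case by (intro exI[of _ 0]) (auto simp: thr_letters_def split: if_splits)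
next
  case (Suc l)
  show ?case
  proof (cases "t < x")
    case False
    then have "orbit (Suc j) = f1 t" using Suc.prems(1) by simp
    then obtain k where "(f1 ^^ k) (f1 t) < x"
      using Suc.hyps(1)[of "Suc j" "f1 t"] Suc.hyps(2) Suc.prems(2,3) by fastforce
    then show ?thesis by (intro exI[of _ "Suc k"]) (simp add: funpow_swap1)
  qed (auto intro: exI[of _ 0])
qed

lemma f0_run_ends:
  assumes "orbit j = t" "j \<le> j'" "letters j' = 1"
  shows "\<exists>k. x \<le> (f0 ^^ k) t"
  using assms
proof (induction "j' - j" arbitrary: j t)
  case 0
  then show ?case by (intro exI[of _ 0]) (auto simp: thr_letters_def split: if_splits)
next
  case (Suc l)
  show ?case
  proof (cases "x \<le> t")
    case False
    then have "orbit (Suc j) = f0 t" using Suc.prems(1) by simp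
    then obtain k where "x \<le> (f0 ^^ k) (f0 t)"
      using Suc.hyps(1)[of "Suc j" "f0 t"] Suc.hyps(2) Suc.prems(2,3) by fastforce
    then show ?thesis by (intro exI[of _ "Suc k"]) (simp add: funpow_swap1)
  qed (auto intro: exI[of _ 0])
qed

end

section \<open>Renormalisation\<close>

definition threshold_words_valid_below :: "real set \<Rightarrow> nat \<Rightarrow> bool" where
  "threshold_words_valid_below I n \<longleftrightarrow> (\<forall>g0 g1 c m. m < n \<longrightarrow> threshold_system I g0 g1 c
     \<longrightarrow> minimal_period (thr_letters g0 g1 c) m \<longrightarrow> valid_word (map (thr_letters g0 g1 c) [0..<m]))"

context threshold_system
begin

lemma renormalized_system:
  fixes F H :: "real \<Rightarrow> real" and R :: "real set"
  defines "G \<equiv> \<lambda>t. if x \<le> F t then f1 (F t) else H t"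
  assumes F: "incr_nonexpansive_on I F" "F ` I \<subseteq> I" "F (f1 x) \<le> x"
    and H: "incr_contraction_on I H" "H ` I \<subseteq> I"
    and R: "R \<subseteq> I" "f1 x \<in> R" "\<And>t. t \<in> R \<Longrightarrow> f1 x \<le> t" "\<And>t. t \<in> R \<Longrightarrow> G t \<in> R"
    and hit: "x \<le> F ((G ^^ i) (f1 x))"
  obtains c where "threshold_system I H (f1 \<circ> F) c"
    and "\<And>j. thr_letters H (f1 \<circ> F) c j = (if x \<le> F ((G ^^ j) (f1 x)) then 1 else 0)"
proof -
  have orbit_R: "(G ^^ j) (f1 x) \<in> R" for j
    by (induction j) (simp_all add: R)
  then have "(G ^^ i) (f1 x) \<in> I" "f1 x \<in> I"
    using R(1,2) by auto
  then obtain c where c: "c \<in> I" "F c = x"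
    using incr_nonexpansive_on_IVT[OF interval F(1) _ _ R(3)[OF orbit_R] F(3) hit] by metis
  have cross: "x \<le> F t \<longleftrightarrow> c \<le> t" if "t \<in> I" for t
    using incr_nonexpansive_on_le_iff[OF F(1) c(1) that] c(2) by simp
  have system: "threshold_system I H (f1 \<circ> F) c"
  proof
    show "(f1 \<circ> F) ` I \<subseteq> I" using F(2) maps1 by auto
    show "incr_contraction_on I (f1 \<circ> F)"
      by (rule incr_contraction_on_comp[OF contraction1 F(1,2)])
  qed (use interval H c(1) in auto)
  have start: "(f1 \<circ> F) c = f1 x" using c(2) by simp
  have "thr_orbit H (f1 \<circ> F) c j = (G ^^ j) (f1 x)" for j
    unfolding thr_orbit_eq_funpow start
  proof (rule funpow_cong_invariant[where R = R, symmetric])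
    show "f1 x \<in> R" by (rule R(2))
    show "G t = (if c \<le> t then (f1 \<circ> F) t else H t)" if "t \<in> R" for t
      using cross[of t] that R(1) by (auto simp: G_def)
  qed (rule R(4))
  then have "thr_letters H (f1 \<circ> F) c j = (if x \<le> F ((G ^^ j) (f1 x)) then 1 else 0)" for j
    using cross[of "(G ^^ j) (f1 x)"] orbit_R[of j] R(1) by (auto simp: thr_letters_def)
  with system show ?thesis by (rule that)
qed

lemma valid_word_by_renormalization:
  fixes F H :: "real \<Rightarrow> real" and R :: "real set" and blk :: "nat \<Rightarrow> nat list" and d :: nat
  defines "G \<equiv> \<lambda>t. if x \<le> F t then f1 (F t) else H t"
    and "kind \<equiv> \<lambda>t. if x \<le> F t then 1 else 0 :: nat"
  assumes IH: "threshold_words_valid_below I n"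
    and minimal: "minimal_period letters n"
    and F: "incr_nonexpansive_on I F" "F ` I \<subseteq> I" "F (f1 x) \<le> x"
    and H: "incr_contraction_on I H" "H ` I \<subseteq> I"
    and R: "R \<subseteq> I" "f1 x \<in> R" "\<And>t. t \<in> R \<Longrightarrow> f1 x \<le> t" "\<And>t. t \<in> R \<Longrightarrow> G t \<in> R"
    and blocks: "\<And>j. orbit j \<in> R \<Longrightarrow>
      map letters [j..<j + length (blk (kind (orbit j)))] = blk (kind (orbit j))
      \<and> orbit (j + length (blk (kind (orbit j)))) = G (orbit j)"
    and long: "\<And>t. t \<in> R \<Longrightarrow> 2 \<le> length (blk (kind t))"
    and decode: "\<And>j. orbit j \<in> R \<Longrightarrow> letters (j + d) = kind (orbit j)"
    and no_overlap: "\<And>t r. t \<in> R \<Longrightarrow> 0 < r \<Longrightarrow> r < length (blk (kind t))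
      \<Longrightarrow> \<exists>k. r + k < length (blk (kind t)) \<and> blk (kind t) ! (r + k) \<noteq> letters k"
    and valid_blk0: "valid_word (blk 0)"
    and valid_concat: "\<And>v. 2 \<le> length (blk 1) \<Longrightarrow> valid_word v \<Longrightarrow> valid_word (concat (map blk v))"
  shows "valid_word (map letters [0..<n])"
proof -
  define w where "w = (\<lambda>i. kind ((G ^^ i) (f1 x)))"
  obtain m where minimal_w: "minimal_period w m" and "m < n"
    and word: "map letters [0..<n] = concat (map blk (map w [0..<m]))"
    using minimal_period_of_return_blocks[where orb = orbit and R = R and G = G and kind = kind
        and blk = blk and s = letters and d = d] R(2,4) blocks long decode no_overlap minimal
    unfolding w_def by auto
  have long_w: "2 \<le> length (blk (w i))" for i
  proof -
    have "(G ^^ i) (f1 x) \<in> R" by (induction i) (simp_all add: R)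
    then show ?thesis using long by (simp add: w_def)
  qed
  show ?thesis
  proof (cases "\<exists>i. w i = 1")
    case True
    then obtain i where "x \<le> F ((G ^^ i) (f1 x))"
      by (auto simp: w_def kind_def split: if_splits)
    then obtain c where system: "threshold_system I H (f1 \<circ> F) c"
      and "\<And>j. thr_letters H (f1 \<circ> F) c j = w j"
      using renormalized_system[OF F H R(1-3), of i] R(4) unfolding G_def w_def kind_def by blast
    then have "thr_letters H (f1 \<circ> F) c = w" by auto
    with IH \<open>m < n\<close> system minimal_w have "valid_word (map w [0..<m])"
      unfolding threshold_words_valid_below_def by metis
    moreover have "2 \<le> length (blk 1)"
      using True long_w by metis
    ultimately have "valid_word (concat (map blk (map w [0..<m])))"
      using valid_concat by blast
    then show ?thesis unfolding word .
  next
    case False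
    have zero: "w i = 0" for i
      using False by (auto simp: w_def kind_def split: if_splits)
    then have "is_period w 1"
      unfolding is_period_one_iff by simp
    with minimal_w have "m = 1"
      unfolding minimal_period_def is_period_def by (metis le_antisym less_one not_le)
    with word zero show ?thesis
      using valid_blk0 by simp
  qed
qed

lemma first_return_R:
  assumes minimal: "minimal_period letters n"
    and below: "f1 x < x" and above: "x < f0 x" and case_R: "x < f1 (f0 x)"
  obtains q where "\<And>r. r < q \<Longrightarrow> x \<le> (f1 ^^ r) (f0 (f1 x))"
    "(f1 ^^ q) (f0 (f1 x)) < x" "0 < q"
proof -
  have "f0 x - f0 (f1 x) < x - f1 x"
    by (rule incr_contraction_on_diff_less[OF contraction0 f1_in[OF threshold] threshold below])
  moreover have "f1 (f0 x) - f1 x < f0 x - x"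
    by (rule incr_contraction_on_diff_less[OF contraction1 threshold f0_in[OF threshold] above])
  ultimately have f0_f1: "x < f0 (f1 x)" using case_R by simp
  have "letters n = letters 0" "0 < n"
    using minimal unfolding minimal_period_def is_period_def by (metis add_0, blast)
  then have "letters n = 0" "1 \<le> n"
    using below by (simp_all add: thr_letters_eq_0)
  moreover have "orbit 1 = f0 (f1 x)" using below by simp
  ultimately obtain k where "(f1 ^^ k) (f0 (f1 x)) < x"
    using f1_run_ends by blast
  then obtain q where "\<forall>r\<le>q. \<not> (f1 ^^ r) (f0 (f1 x)) < x" "(f1 ^^ Suc q) (f0 (f1 x)) < x"
    using ex_least_nat_less[of "\<lambda>k. (f1 ^^ k) (f0 (f1 x)) < x"] f0_f1 by auto
  then show ?thesis
    by (intro that[of "Suc q"]) (auto simp: less_Suc_eq_le not_less)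
qed

lemma return_R:
  assumes q: "\<And>r. r < q \<Longrightarrow> x \<le> (f1 ^^ r) (f0 (f1 x))" "(f1 ^^ q) (f0 (f1 x)) < x" "0 < q"
    and t: "t \<in> I" "f1 x \<le> t" "t < x"
  defines "k \<equiv> q + (if x \<le> (f1 ^^ q) (f0 t) then 1 else 0)"
  shows return_R_run: "r < k \<Longrightarrow> x \<le> (f1 ^^ r) (f0 t)"
    and return_R_lands: "(f1 ^^ k) (f0 t) \<in> I \<and> f1 x \<le> (f1 ^^ k) (f0 t) \<and> (f1 ^^ k) (f0 t) < x"
proof -
  have fx_in: "f1 x \<in> I" by (rule f1_in[OF threshold])
  note nonexp_q = incr_nonexpansive_on_funpow[OF maps1 nonexpansive1, of q]
  have f0_le: "f0 (f1 x) \<le> f0 t"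
    using incr_nonexpansive_on_le_iff[OF nonexpansive0 fx_in t(1)] t(2) by simp
  have ones: "x \<le> (f1 ^^ r) (f0 t)" if "r < q" for r
    using incr_nonexpansive_on_le_iff[OF incr_nonexpansive_on_funpow[OF maps1 nonexpansive1, of r]
        f0_in[OF fx_in] f0_in[OF t(1)]] f0_le q(1)[OF that] by linarith
  show "x \<le> (f1 ^^ r) (f0 t)" if "r < k" for r
    using ones that by (cases "r < q") (auto simp: k_def less_Suc_eq split: if_splits)
  define z where "z = (f1 ^^ q) (f0 t)"
  have z_in: "z \<in> I" using funpow_image_subset[OF maps1] f0_in[OF t(1)] by (auto simp: z_def)
  show "(f1 ^^ k) (f0 t) \<in> I \<and> f1 x \<le> (f1 ^^ k) (f0 t) \<and> (f1 ^^ k) (f0 t) < x"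
  proof (cases "x \<le> z")
    case True
    have "f1 z - f1 x \<le> z - x"
      by (rule incr_nonexpansive_on_diff_le[OF nonexpansive1 threshold z_in True])
    moreover have "z - (f1 ^^ q) (f0 (f1 x)) \<le> f0 t - f0 (f1 x)"
      unfolding z_def
      by (rule incr_nonexpansive_on_diff_le[OF nonexp_q f0_in[OF fx_in] f0_in[OF t(1)] f0_le])
    moreover have "f0 t - f0 (f1 x) \<le> t - f1 x"
      by (rule incr_nonexpansive_on_diff_le[OF nonexpansive0 fx_in t(1,2)])
    moreover have "f1 x \<le> f1 z"
      using incr_nonexpansive_on_le_iff[OF nonexpansive1 threshold z_in] True by simp
    ultimately show ?thesis
      using True q(2) t f1_in[OF z_in] by (simp add: k_def z_def)
  next
    case False
    obtain q' where q': "q = Suc q'" using q(3) by (cases q) auto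
    have "(f1 ^^ q') (f0 t) \<in> I" using funpow_image_subset[OF maps1] f0_in[OF t(1)] by blast
    moreover have "x \<le> (f1 ^^ q') (f0 t)" using ones q' by simp
    ultimately have "f1 x \<le> z"
      using incr_nonexpansive_on_le_iff[OF nonexpansive1 threshold] q' by (simp add: z_def)
    with False z_in show ?thesis by (simp add: k_def z_def)
  qed
qed

lemma valid_word_step_R:
  fixes q :: nat
  assumes IH: "threshold_words_valid_below I n"
    and minimal: "minimal_period letters n" and below: "f1 x < x"
    and q: "\<And>r. r < q \<Longrightarrow> x \<le> (f1 ^^ r) (f0 (f1 x))" "(f1 ^^ q) (f0 (f1 x)) < x" "0 < q"
  shows "valid_word (map letters [0..<n])"
proof -
  define F where "F = (f1 ^^ q) \<circ> f0"
  define R where "R = {t \<in> I. f1 x \<le> t \<and> t < x}"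
  define blk where "blk = (\<lambda>a::nat. if a = 0 then 0 # replicate q 1 else 0 # replicate (q + 1) (1::nat))"
  define kind where "kind t = (if x \<le> F t then 1 else 0 :: nat)" for t
  have F_contr: "incr_contraction_on I F"
    unfolding F_def
    by (rule incr_contraction_on_comp'[OF incr_nonexpansive_on_funpow[OF maps1 nonexpansive1]
          contraction0 maps0])
  have F_maps: "F ` I \<subseteq> I"
    using funpow_image_subset[OF maps1] maps0 by (fastforce simp: F_def)
  have Fu: "F (f1 x) \<le> x" using q(2) by (simp add: F_def)
  have R_in: "t \<in> I" "f1 x \<le> t" "t < x" if "t \<in> R" for t
    using that by (simp_all add: R_def)
  have k_eq: "q + kind t = q + (if x \<le> (f1 ^^ q) (f0 t) then 1 else 0)" for t
    by (simp add: kind_def F_def)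
  have run: "x \<le> (f1 ^^ r) (f0 t)" if "t \<in> R" "r < q + kind t" for t r
    using return_R_run[OF q R_in[OF that(1)] that(2)[unfolded k_eq]] .
  have lands: "(f1 ^^ (q + kind t)) (f0 t) \<in> R" if "t \<in> R" for t
    using return_R_lands[OF q R_in[OF that]] unfolding k_eq R_def by blast
  have blk_kind: "blk (kind t) = 0 # replicate (q + kind t) 1" for t
    by (simp add: blk_def kind_def)
  have G_kind: "(if x \<le> F t then f1 (F t) else F t) = (f1 ^^ (q + kind t)) (f0 t)" for t
    by (simp add: kind_def F_def)
  show ?thesis
  proof (rule valid_word_by_renormalization[where F = F and H = F and R = R and blk = blk
        and d = "q + 1", folded kind_def])
    show "R \<subseteq> I" "f1 x \<in> R" by (auto simp: R_def f1_in threshold below)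
    show "f1 x \<le> t" if "t \<in> R" for t using that by (simp add: R_def)
    show "(if x \<le> F t then f1 (F t) else F t) \<in> R" if "t \<in> R" for t
      unfolding G_kind by (rule lands[OF that])
    show "map letters [j..<j + length (blk (kind (orbit j)))] = blk (kind (orbit j))
        \<and> orbit (j + length (blk (kind (orbit j))))
          = (if x \<le> F (orbit j) then f1 (F (orbit j)) else F (orbit j))"
      if "orbit j \<in> R" for j
      using orbit_block_0_1s[of j "orbit j" "q + kind (orbit j)"] run[OF that] that
      unfolding blk_kind G_kind by (simp add: R_def)
    show "2 \<le> length (blk (kind t))" for t using q(3) by (simp add: blk_kind)
    show "letters (j + (q + 1)) = kind (orbit j)" if "orbit j \<in> R" for j
    proof -
      have "orbit (j + Suc q) = F (orbit j)"
        using orbit_block_0_1s[of j "orbit j" q] run[OF that] that by (simp add: R_def F_def)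
      then show ?thesis by (simp add: thr_letters_def kind_def)
    qed
    show "\<exists>k. r + k < length (blk (kind t)) \<and> blk (kind t) ! (r + k) \<noteq> letters k"
      if "0 < r" "r < length (blk (kind t))" for t r
      using that below by (intro exI[of _ 0]) (simp add: blk_kind thr_letters_eq_0 nth_Cons')
    show "valid_word (blk 0)"
      using valid_R[OF valid_zero, of q] q(3) by (simp add: morphR_def blk_def)
    show "valid_word (concat (map blk v))" if "valid_word v" for v
      using valid_R[OF that, of q] q(3) by (simp add: morphR_def blk_def)
  qed (fact IH minimal incr_contraction_on_imp_nonexpansive[OF F_contr] F_maps Fu F_contr)+
qed

lemma first_return_L:
  assumes below: "f1 x < x" and "letters j = 1"
  obtains p where "\<And>r. r \<le> p \<Longrightarrow> (f0 ^^ r) (f1 x) < x" "x \<le> (f0 ^^ Suc p) (f1 x)"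
proof -
  obtain k where "x \<le> (f0 ^^ k) (f1 x)"
    using f0_run_ends[of 0 "f1 x" j] assms(2) by auto
  then obtain p where "\<forall>r\<le>p. \<not> x \<le> (f0 ^^ r) (f1 x)" "x \<le> (f0 ^^ Suc p) (f1 x)"
    using ex_least_nat_less[of "\<lambda>k. x \<le> (f0 ^^ k) (f1 x)"] below by auto
  then show ?thesis by (intro that[of p]) (auto simp: not_le)
qed

lemma funpow_f0_stays_above:
  assumes "x \<le> f0 x" "z \<in> I" "x \<le> z"
  shows "f0 x \<le> (f0 ^^ Suc k) z"
proof (induction k)
  case 0
  show ?case using incr_nonexpansive_on_le_iff[OF nonexpansive0 threshold assms(2)] assms(3) by simp
next
  case (Suc k)
  have "(f0 ^^ Suc k) z \<in> I" using funpow_image_subset[OF maps0] assms(2) by blast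
  with Suc assms(1) show ?case
    using incr_nonexpansive_on_le_iff[OF nonexpansive0 threshold] by fastforce
qed

text \<open>Once an iterate of \<open>f0\<close> reaches \<open>x\<close>, all later ones stay above \<open>f0 x\<close>; but \<open>(f0 ^^ p) t\<close>
  lies within \<open>t - f1 x < f0 x - x\<close> of \<open>(f0 ^^ p) (f1 x) < x\<close>.\<close>
lemma zeros_run_L:
  assumes above: "x < f0 x" and ret: "(f0 ^^ p) (f1 x) < x"
    and t: "t \<in> I" "f1 x \<le> t" "t - f1 x < f0 x - x"
  shows "(f0 ^^ p) t < f0 x" "r < p \<Longrightarrow> (f0 ^^ r) t < x"
proof -
  have "(f0 ^^ p) t - (f0 ^^ p) (f1 x) \<le> t - f1 x"
    using incr_nonexpansive_on_diff_le[OF incr_nonexpansive_on_funpow[OF maps0 nonexpansive0]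
        f1_in[OF threshold] t(1,2)] .
  with ret t(3) show below_f0: "(f0 ^^ p) t < f0 x" by simp
  show "(f0 ^^ r) t < x" if "r < p"
  proof (rule ccontr)
    assume "\<not> (f0 ^^ r) t < x"
    then have "f0 x \<le> (f0 ^^ Suc (p - Suc r)) ((f0 ^^ r) t)"
      using funpow_f0_stays_above[OF less_imp_le[OF above]] funpow_image_subset[OF maps0] t(1)
      by (simp add: image_subset_iff)
    also have "\<dots> = (f0 ^^ (Suc (p - Suc r) + r)) t"
      by (simp only: funpow_add comp_apply)
    also have "\<dots> = (f0 ^^ p) t"
      using that by simp
    finally show False using below_f0 by simp
  qed
qed

lemma return_L:
  assumes above: "x < f0 x" and case_L: "f1 (f0 x) \<le> x"
    and p: "\<And>r. r \<le> p \<Longrightarrow> (f0 ^^ r) (f1 x) < x" "x \<le> (f0 ^^ Suc p) (f1 x)"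
    and t: "t \<in> I" "f1 x \<le> t" "t < x" "t - f1 x < f0 x - x"
  defines "k \<equiv> p + (if x \<le> (f0 ^^ p) t then 0 else 1)"
  shows return_L_run: "r < k \<Longrightarrow> (f0 ^^ r) t < x"
    and return_L_lands: "x \<le> (f0 ^^ k) t \<and> f1 ((f0 ^^ k) t) \<in> I \<and> f1 x \<le> f1 ((f0 ^^ k) t)
      \<and> f1 ((f0 ^^ k) t) < x \<and> f1 ((f0 ^^ k) t) - f1 x < f0 x - x"
proof -
  note zeros = zeros_run_L[OF above p(1)[OF order_refl] t(1,2,4)]
  show "(f0 ^^ r) t < x" if "r < k" for r
    using zeros(2) that by (cases "r < p") (auto simp: k_def less_Suc_eq split: if_splits)
  define z where "z = (f0 ^^ k) t"
  have z_in: "z \<in> I" using funpow_image_subset[OF maps0] t(1) by (auto simp: z_def)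
  have "x \<le> z \<and> z < f0 x"
  proof (cases "x \<le> (f0 ^^ p) t")
    case False
    have "(f0 ^^ Suc p) (f1 x) \<le> (f0 ^^ Suc p) t"
      using incr_nonexpansive_on_le_iff[OF incr_nonexpansive_on_funpow[OF maps0 nonexpansive0]
          f1_in[OF threshold] t(1), of "Suc p"] t(2) by (simp only:)
    moreover have "(f0 ^^ p) t \<in> I"
      using funpow_image_subset[OF maps0] t(1) by blast
    with False have "f0 ((f0 ^^ p) t) < f0 x"
      using incr_nonexpansive_on_less_iff[OF nonexpansive0 _ threshold] by simp
    ultimately show ?thesis
      using False p(2) by (simp add: z_def k_def)
  qed (use zeros(1) in \<open>simp add: z_def k_def\<close>)
  with z_in have z: "z \<in> I" "x \<le> z" "z < f0 x" by auto
  have "f1 z - f1 x \<le> z - x"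
    by (rule incr_nonexpansive_on_diff_le[OF nonexpansive1 threshold z(1,2)])
  moreover have "f1 x \<le> f1 z" "f1 z < f1 (f0 x)"
    using incr_nonexpansive_on_le_iff[OF nonexpansive1 threshold z(1)]
      incr_nonexpansive_on_less_iff[OF nonexpansive1 z(1) f0_in[OF threshold]] z by auto
  ultimately show "x \<le> (f0 ^^ k) t \<and> f1 ((f0 ^^ k) t) \<in> I \<and> f1 x \<le> f1 ((f0 ^^ k) t)
      \<and> f1 ((f0 ^^ k) t) < x \<and> f1 ((f0 ^^ k) t) - f1 x < f0 x - x"
    using z case_L f1_in[OF z(1)] by (simp add: z_def)
qed

lemma valid_word_step_L:
  fixes p :: nat
  assumes IH: "threshold_words_valid_below I n"
    and minimal: "minimal_period letters n"
    and below: "f1 x < x" and above: "x < f0 x" and case_L: "f1 (f0 x) \<le> x"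
    and p: "\<And>r. r \<le> p \<Longrightarrow> (f0 ^^ r) (f1 x) < x" "x \<le> (f0 ^^ Suc p) (f1 x)"
  shows "valid_word (map letters [0..<n])"
proof -
  define F where "F = f0 ^^ p"
  define H where "H = f1 \<circ> f0 ^^ Suc p"
  define R where "R = {t \<in> I. f1 x \<le> t \<and> t < x \<and> t - f1 x < f0 x - x}"
  define blk where "blk = (\<lambda>a::nat. if a = 0 then replicate (p + 1) 0 @ [1] else replicate p 0 @ [1::nat])"
  define kind where "kind t = (if x \<le> F t then 1 else 0 :: nat)" for t
  define a where "a t = p + (if x \<le> (f0 ^^ p) t then 0 else 1)" for t
  have nonexp_f0: "incr_nonexpansive_on I (f0 ^^ k)" for k
    by (rule incr_nonexpansive_on_funpow[OF maps0 nonexpansive0])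
  have Fu: "F (f1 x) \<le> x" using p(1)[of p] by (simp add: F_def)
  have H_contr: "incr_contraction_on I H"
    unfolding H_def
    by (rule incr_contraction_on_comp[OF contraction1 nonexp_f0 funpow_image_subset[OF maps0]])
  have H_maps: "H ` I \<subseteq> I"
    using funpow_image_subset[OF maps0, of "Suc p"] maps1 unfolding H_def
    by (metis image_comp image_mono order_trans)
  have R_in: "t \<in> I" "f1 x \<le> t" "t < x" "t - f1 x < f0 x - x" if "t \<in> R" for t
    using that by (simp_all add: R_def)
  have lands: "x \<le> (f0 ^^ a t) t \<and> f1 ((f0 ^^ a t) t) \<in> R" if "t \<in> R" for t
    using return_L_lands[OF above case_L p R_in[OF that]] unfolding a_def R_def by blast
  have blk_kind: "blk (kind t) = replicate (a t) 0 @ [1]" for t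
    by (simp add: blk_def a_def kind_def F_def)
  have G_kind: "(if x \<le> F t then f1 (F t) else H t) = f1 ((f0 ^^ a t) t)" for t
    by (simp add: a_def H_def F_def)
  have block: "map letters [j..<j + Suc (a (orbit j))] = replicate (a (orbit j)) 0 @ [1]
      \<and> orbit (j + Suc (a (orbit j))) = f1 ((f0 ^^ a (orbit j)) (orbit j))" if "orbit j \<in> R" for j
    using orbit_block_0s_1[OF refl return_L_run[OF above case_L p R_in[OF that]]] lands[OF that]
    unfolding a_def by simp
  have start: "letters k = 0" if "k \<le> p" for k
  proof -
    have "map letters [0..<0 + Suc p] = replicate (Suc p) 0"
      using thr_orbit_run0[of f0 f1 x 0 "f1 x" "Suc p"] p(1) by simp
    then have "map letters [0..<Suc p] ! k = replicate (Suc p) 0 ! k" by simp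
    with that show ?thesis by (simp del: upt_Suc replicate_Suc)
  qed
  show ?thesis
  proof (rule valid_word_by_renormalization[where F = F and H = H and R = R
        and blk = blk and d = p, folded kind_def])
    show "R \<subseteq> I" "f1 x \<in> R" by (auto simp: R_def f1_in threshold below above)
    show "f1 x \<le> t" if "t \<in> R" for t using R_in[OF that] by simp
    show "(if x \<le> F t then f1 (F t) else H t) \<in> R" if "t \<in> R" for t
      unfolding G_kind using lands[OF that] by blast
    show "map letters [j..<j + length (blk (kind (orbit j)))] = blk (kind (orbit j))
        \<and> orbit (j + length (blk (kind (orbit j))))
          = (if x \<le> F (orbit j) then f1 (F (orbit j)) else H (orbit j))"
      if "orbit j \<in> R" for j
      unfolding blk_kind G_kind using block[OF that] by simp
    show "2 \<le> length (blk (kind t))" if "t \<in> R" for t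
      using R_in[OF that] by (cases p) (auto simp: blk_def kind_def F_def)
    show "letters (j + p) = kind (orbit j)" if "orbit j \<in> R" for j
    proof -
      have "letters (j + p) = map letters [j..<j + Suc (a (orbit j))] ! p"
        by (subst nth_map_upt) (auto simp: a_def)
      also have "\<dots> = (replicate (a (orbit j)) 0 @ [1]) ! p"
        using block[OF that] by (simp only:)
      also have "\<dots> = kind (orbit j)"
        by (auto simp: a_def kind_def F_def nth_append nth_Cons')
      finally show ?thesis .
    qed
    show "\<exists>k. r + k < length (blk (kind t)) \<and> blk (kind t) ! (r + k) \<noteq> letters k"
      if "0 < r" "r < length (blk (kind t))" for t r
    proof (intro exI conjI)
      show "r + (a t - r) < length (blk (kind t))" using that by (simp add: blk_kind)
      have "letters (a t - r) = 0" using that start by (simp add: a_def)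
      then show "blk (kind t) ! (r + (a t - r)) \<noteq> letters (a t - r)"
        using that by (simp add: blk_kind nth_append)
    qed
    show "valid_word (blk 0)" \<comment> \<open>\<open>p\<close> may be \<open>0\<close>, so write \<open>0\<^sup>p\<^sup>+\<^sup>1 1\<close> as \<open>L\<^sub>p\<^sub>+\<^sub>1 1\<close>\<close>
      using valid_L[OF valid_one, of "p + 1"] by (simp add: morphL_def blk_def)
    show "valid_word (concat (map blk v))" if "2 \<le> length (blk 1)" "valid_word v" for v
      using valid_L[OF that(2), of p] that(1) by (simp add: morphL_def blk_def)
  qed (fact IH minimal nonexp_f0[of p, folded F_def]
      funpow_image_subset[OF maps0, of p, folded F_def] Fu H_contr H_maps)+
qed

end

theorem valid_word_thr_letters:
  assumes "threshold_system I f0 f1 x" and "minimal_period (thr_letters f0 f1 x) n"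
  shows "valid_word (map (thr_letters f0 f1 x) [0..<n])"
  using assms
proof (induction n arbitrary: f0 f1 x rule: less_induct)
  case (less n)
  interpret threshold_system I f0 f1 x by (rule less.prems(1))
  have IH: "threshold_words_valid_below I n"
    unfolding threshold_words_valid_below_def using less.IH by blast
  show ?case
  proof (cases "is_period letters 1")
    case True
    with less.prems(2) have "n \<le> 1"
      unfolding minimal_period_def by blast
    moreover have "0 < n"
      using less.prems(2) unfolding minimal_period_def is_period_def by blast
    ultimately have "n = 1" by simp
    then show ?thesis using thr_letters_01[of f0 f1 x 0] valid_zero valid_one by auto
  next
    case False
    note below = straddle_if_not_constant(1)[OF False]
      and above = straddle_if_not_constant(2)[OF False]
    show ?thesis
    proof (cases "f1 (f0 x) \<le> x")
      case True
      obtain j where "letters j \<noteq> letters 0"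
        using False unfolding is_period_one_iff by blast
      moreover have "letters 0 = 0"
        using below by (simp add: thr_letters_eq_0)
      ultimately have "letters j = 1"
        using thr_letters_01[of f0 f1 x j] by simp
      then obtain p where "\<And>r. r \<le> p \<Longrightarrow> (f0 ^^ r) (f1 x) < x" "x \<le> (f0 ^^ Suc p) (f1 x)"
        by (rule first_return_L[OF below]) blast
      from valid_word_step_L[OF IH less.prems(2) below above True this] show ?thesis .
    next
      case False
      then have "x < f1 (f0 x)" by simp
      then obtain q where "\<And>r. r < q \<Longrightarrow> x \<le> (f1 ^^ r) (f0 (f1 x))"
        "(f1 ^^ q) (f0 (f1 x)) < x" "0 < q"
        by (rule first_return_R[OF less.prems(2) below above]) blast
      from valid_word_step_R[OF IH less.prems(2) below this] show ?thesis .
    qed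
  qed
qed

lemma (in threshold_system) valid_threshold_word:
  assumes "is_threshold_word f0 f1 x tw"
  shows "valid_word tw"
proof (cases "is_period letters 1")
  case True
  have drives: "drives_orbit f0 f1 x tw"
    and shortest: "\<And>w. drives_orbit f0 f1 x w \<Longrightarrow> length tw \<le> length w"
    using assms unfolding is_threshold_word_def by auto
  from True have "\<forall>j. letters j = letters 0" unfolding is_period_one_iff .
  then have "drives_orbit f0 f1 x [letters 0]"
    by (intro drives_orbit_if_letters) (simp_all, metis)
  then have "length tw \<le> 1" using shortest by fastforce
  moreover have "tw \<noteq> []" "set tw \<subseteq> {0, 1}" using drives unfolding drives_orbit_def by auto
  ultimately obtain a where "tw = [a]" "a \<in> {0, 1}"
    by (cases tw) auto
  then show ?thesis using valid_zero valid_one by auto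
next
  case False
  have "minimal_period letters (length tw)" "tw = map letters [0..<length tw]"
    using threshold_word_eq_letters[OF straddle_if_not_constant[OF False] assms] by auto
  with valid_word_thr_letters[OF threshold_system_axioms] show ?thesis by metis
qed

lemma threshold_system_if_A2:
  assumes "is_interval I" "\<forall>y\<in>I. f0 y \<in> I" "\<forall>y\<in>I. f1 y \<in> I"
    and "assumption_A2 I f0 f1" "x \<in> I"
  shows "threshold_system I f0 f1 x"
proof
  show "f0 ` I \<subseteq> I" "f1 ` I \<subseteq> I" using assms(2,3) by auto
  show "incr_contraction_on I f0" "incr_contraction_on I f1"
    using assms(4) unfolding assumption_A2_def incr_contraction_on_def by blast+
qed (fact assms)+

theorem mainTheorem8:
  fixes I :: "real set" and phi0 phi1 :: "real \<Rightarrow> real" and x :: real and tw :: "nat list"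
  assumes "is_interval I"
    and "\<forall>y\<in>I. phi0 y \<in> I" and "\<forall>y\<in>I. phi1 y \<in> I"
    and "assumption_A2 I phi0 phi1"
    and "x \<in> I"
    and "is_threshold_word phi0 phi1 x tw"
  shows "valid_word tw"
  using threshold_system.valid_threshold_word[OF threshold_system_if_A2[OF assms(1-5)] assms(6)] .

end
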